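(* Let $M$ be a rank-3 paving matroid on a linearly ordered finite ground set $E$, and let $M^0$ and $M^1$ be the rank-3 sparse paving matroids on $E$ whose sets of circuit-hyperplanes are $\mathcal{V}^0(M)$ and $\mathcal{V}^1(M)$ respectively. If $M$ has no minor isomorphic to $\mathcal{W}^3$ or $M(K_4)$, then neither $M^0$ nor $M^1$ has a minor isomorphic to $\mathcal{W}^3$ or $M(K_4)$.
   Context: A matroid is paving if every circuit has size $r(M)$ or $r(M)+1$; it is sparse paving if every nonspanning circuit is a hyperplane. For a hyperplane $H$ of $M$ (a rank-2 flat), let $\mathcal{V}(H)$ be the set of 3-subsets $V\subseteq H$ that are consecutive in $H$, i.e. there are no $v,v'\in V$ and $h\in H\setminus V$ with $v<h<v'$. Listing them in increasing order as $\mathcal{V}(H)=\{V_H^0,V_H^1,\dots,V_H^{|H|-3}\}$ (so consecutive ones share exactly two elements), set $\mathcal{V}^0(H)=\{V_H^i: i \text{ even}\}$, $\mathcal{V}^1(H)=\{V_H^i: i\text{ odd}\}$, and $\mathcal{V}^k(M)=\bigcup_{H}\mathcal{V}^k(H)$ over all hyperplanes $H$ of $M$, for $k\in\{0,1\}$. It is known (Pendavingh–Van der Pol) that each $\mathcal{V}^k(M)$ is the set of circuit-hyperplanes of a rank-3 sparse paving matroid on $E$. $\mathcal{W}^3$ is the rank-3 matroid on $\{a,b,c,d,e,f\}$ whose only dependent 3-sets are $\{a,b,c\},\{c,d,e\},\{e,f,a\}$; $M(K_4)$ is the rank-3 matroid on $\{a,b,c,d,e,f\}$ whose only dependent 3-sets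 are $\{a,b,c\},\{c,d,e\},\{e,f,a\},\{b,d,f\}$. *)

theory Defs
  imports Main
begin

definition matroid :: "'a set \<Rightarrow> 'a set set \<Rightarrow> bool" where
  "matroid E I \<longleftrightarrow> finite E \<and> I \<subseteq> Pow E \<and> {} \<in> I
     \<and> (\<forall>X Y. Y \<in> I \<and> X \<subseteq> Y \<longrightarrow> X \<in> I)
     \<and> (\<forall>X Y. X \<in> I \<and> Y \<in> I \<and> card X < card Y \<longrightarrow> (\<exists>e\<in>Y - X. insert e X \<in> I))"

definition rk :: "'a set set \<Rightarrow> 'a set \<Rightarrow> nat" where
  "rk I X = Max (card ` {Y. Y \<subseteq> X \<and> Y \<in> I})"

definition circuit :: "'a set \<Rightarrow> 'a set set \<Rightarrow> 'a set \<Rightarrow> bool" where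
  "circuit E I C \<longleftrightarrow> C \<subseteq> E \<and> C \<notin> I \<and> (\<forall>x\<in>C. C - {x} \<in> I)"

definition flat :: "'a set \<Rightarrow> 'a set set \<Rightarrow> 'a set \<Rightarrow> bool" where
  "flat E I X \<longleftrightarrow> X \<subseteq> E \<and> (\<forall>e\<in>E - X. rk I (insert e X) > rk I X)"

definition hyperplane :: "'a set \<Rightarrow> 'a set set \<Rightarrow> 'a set \<Rightarrow> bool" where
  "hyperplane E I H \<longleftrightarrow> flat E I H \<and> rk I H = rk I E - 1"

definition paving :: "'a set \<Rightarrow> 'a set set \<Rightarrow> bool" where
  "paving E I \<longleftrightarrow> (\<forall>C. circuit E I C \<longrightarrow> card C = rk I E \<or> card C = rk I E + 1)"

definition sparse_paving :: "'a set \<Rightarrow> 'a set set \<Rightarrow> bool" where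
  "sparse_paving E I \<longleftrightarrow> paving E I \<and>
     (\<forall>C. circuit E I C \<and> rk I C < rk I E \<longrightarrow> hyperplane E I C)"

definition circuit_hyperplanes :: "'a set \<Rightarrow> 'a set set \<Rightarrow> 'a set set" where
  "circuit_hyperplanes E I = {X. circuit E I X \<and> hyperplane E I X}"

text \<open>Consecutive 3-subsets V_H^i of H (i = 0..|H|-3), listed in increasing order;
  VH k H collects those with index i of parity k.\<close>

definition VH :: "nat \<Rightarrow> 'a::linorder set \<Rightarrow> 'a set set" where
  "VH k H = (let xs = sorted_list_of_set H in
      {set (take 3 (drop i xs)) | i. i + 3 \<le> length xs \<and> i mod 2 = k})"

definition VM :: "nat \<Rightarrow> 'a::linorder set \<Rightarrow> 'a set set \<Rightarrow> 'a set set" where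
  "VM k E I = \<Union> {VH k H | H. hyperplane E I H}"

text \<open>Minors: contract C and delete D (disjoint subsets of E).\<close>

definition minor_indep :: "'a set \<Rightarrow> 'a set set \<Rightarrow> 'a set \<Rightarrow> 'a set \<Rightarrow> 'a set set" where
  "minor_indep E I C D = {X. X \<subseteq> E - C - D \<and> rk I (X \<union> C) = card X + rk I C}"

definition iso :: "'a set \<Rightarrow> 'a set set \<Rightarrow> 'b set \<Rightarrow> 'b set set \<Rightarrow> bool" where
  "iso E1 I1 E2 I2 \<longleftrightarrow> (\<exists>f. bij_betw f E1 E2 \<and> (\<forall>X. X \<subseteq> E1 \<longrightarrow> (X \<in> I1 \<longleftrightarrow> f ` X \<in> I2)))"

definition has_minor_iso :: "'a set \<Rightarrow> 'a set set \<Rightarrow> 'b set \<Rightarrow> 'b set set \<Rightarrow> bool" where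
  "has_minor_iso E I E' I' \<longleftrightarrow> (\<exists>C D. C \<subseteq> E \<and> D \<subseteq> E \<and> C \<inter> D = {} \<and>
      iso (E - C - D) (minor_indep E I C D) E' I')"

text \<open>Ground set {a,b,c,d,e,f} encoded as {0,1,2,3,4,5}.\<close>

definition six :: "nat set" where "six = {0,1,2,3,4,5}"

definition W3_indep :: "nat set set" where
  "W3_indep = {X. X \<subseteq> six \<and> card X \<le> 3 \<and> X \<notin> {{0,1,2},{2,3,4},{4,5,0}}}"

definition MK4_indep :: "nat set set" where
  "MK4_indep = {X. X \<subseteq> six \<and> card X \<le> 3 \<and> X \<notin> {{0,1,2},{2,3,4},{4,5,0},{1,3,5}}}"

end

(* Suppose M^k has a minor isomorphic to W^3 or M(K4). Both have rank 3, like M^k, so nothing is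
   contracted and the minor is the restriction of M^k to six elements h a, ..., h f. Each triangle
   abc, cde, efa is then a 3-element circuit of the sparse paving matroid M^k, hence a
   circuit-hyperplane, hence three consecutive elements of a line (hyperplane) of M. The three lines
   are distinct: on a common line, the middle one of h a, h c, h e would lie in the window of the
   other two. Distinct lines of the rank-3 paving matroid M share at most one point, so every other
   triple of the six points has two points on one of these lines and one off it, and is independent
   in M. Hence M restricted to the six points is W^3 or M(K4), according to whether {h b, h d, h f}
   is independent. *)

theory Submission
  imports Defs
begin

lemma matroid_augment:
  "matroid E I \<Longrightarrow> X \<in> I \<Longrightarrow> Y \<in> I \<Longrightarrow> card X < card Y
    \<Longrightarrow> \<exists>e\<in>Y - X. insert e X \<in> I"
  unfolding matroid_def by blast

lemma matroid_finite_subset: "matroid E I \<Longrightarrow> X \<subseteq> E \<Longrightarrow> finite X"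
  unfolding matroid_def by (metis rev_finite_subset)

lemma finite_rk_candidates:
  assumes "matroid E I" "X \<subseteq> E"
  shows "finite (card ` {Y. Y \<subseteq> X \<and> Y \<in> I})"
proof -
  have "finite (Pow X)" using matroid_finite_subset[OF assms] by simp
  then show ?thesis by (auto intro: finite_subset)
qed

lemma card_le_rk:
  "matroid E I \<Longrightarrow> X \<subseteq> E \<Longrightarrow> Y \<subseteq> X \<Longrightarrow> Y \<in> I \<Longrightarrow> card Y \<le> rk I X"
  unfolding rk_def by (rule Max_ge[OF finite_rk_candidates]) auto

lemma rk_basis:
  assumes "matroid E I" "X \<subseteq> E"
  obtains Y where "Y \<subseteq> X" "Y \<in> I" "card Y = rk I X"
proof -
  have "{} \<in> {Y. Y \<subseteq> X \<and> Y \<in> I}" using assms(1) by (simp add: matroid_def)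
  then have "rk I X \<in> card ` {Y. Y \<subseteq> X \<and> Y \<in> I}"
    unfolding rk_def by (intro Max_in finite_rk_candidates[OF assms]) blast
  then show ?thesis using that by auto
qed

lemma rk_le_card: "matroid E I \<Longrightarrow> X \<subseteq> E \<Longrightarrow> rk I X \<le> card X"
  by (metis rk_basis card_mono matroid_finite_subset)

lemma rk_mono:
  assumes M: "matroid E I" and "Y \<subseteq> E" "X \<subseteq> Y"
  shows "rk I X \<le> rk I Y"
proof -
  obtain B where "B \<subseteq> X" "B \<in> I" "card B = rk I X"
    using rk_basis[OF M, of X] assms(2,3) by blast
  then show ?thesis using card_le_rk[OF M \<open>Y \<subseteq> E\<close>, of B] \<open>X \<subseteq> Y\<close> by simp
qed

lemma rk_eq_card_iff:
  assumes M: "matroid E I" and X: "X \<subseteq> E"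
  shows "rk I X = card X \<longleftrightarrow> X \<in> I"
proof
  assume "rk I X = card X"
  moreover obtain B where "B \<subseteq> X" "B \<in> I" "card B = rk I X" using rk_basis[OF M X] .
  ultimately show "X \<in> I" using card_subset_eq[OF matroid_finite_subset[OF M X]] by metis
next
  assume "X \<in> I"
  then show "rk I X = card X" using card_le_rk[OF M X order_refl] rk_le_card[OF M X] by simp
qed

lemma rk_empty: "matroid E I \<Longrightarrow> rk I {} = 0"
  using rk_le_card[of E I "{}"] by simp

lemma paving_indep_if_card_less:
  assumes M: "matroid E I" and "paving E I" "X \<subseteq> E" "card X < rk I E"
  shows "X \<in> I"
proof (rule ccontr)
  assume "X \<notin> I"
  then obtain C where C: "C \<subseteq> X" "C \<notin> I"
    and minimal: "\<And>Y. Y \<subseteq> X \<Longrightarrow> Y \<notin> I \<Longrightarrow> card C \<le> card Y"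
    using ex_has_least_nat[of "\<lambda>Y. Y \<subseteq> X \<and> Y \<notin> I" X card] by blast
  have "finite X" using matroid_finite_subset[OF M \<open>X \<subseteq> E\<close>] .
  then have "finite C" using C(1) finite_subset by blast
  have "circuit E I C" unfolding circuit_def
  proof (intro conjI ballI)
    show "C \<subseteq> E" using C(1) \<open>X \<subseteq> E\<close> by blast
    fix x assume "x \<in> C"
    then show "C - {x} \<in> I"
      using minimal[of "C - {x}"] C(1) card_Diff1_less[OF \<open>finite C\<close>] by fastforce
  qed (rule C(2))
  then have "rk I E \<le> card C" using \<open>paving E I\<close> unfolding paving_def by fastforce
  moreover have "card C \<le> card X" using card_mono[OF \<open>finite X\<close> C(1)] .
  ultimately show False using \<open>card X < rk I E\<close> by simp
qed

lemma paving_circuitI: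
  assumes M: "matroid E I" and "paving E I" "X \<subseteq> E" "X \<notin> I" "card X = rk I E"
  shows "circuit E I X"
  unfolding circuit_def
proof (intro conjI ballI)
  fix x assume "x \<in> X"
  then have "card (X - {x}) < rk I E"
    using card_Diff1_less[OF matroid_finite_subset[OF M \<open>X \<subseteq> E\<close>]] \<open>card X = rk I E\<close> by simp
  then show "X - {x} \<in> I" using paving_indep_if_card_less[OF M \<open>paving E I\<close>] \<open>X \<subseteq> E\<close> by blast
qed (use assms in auto)

lemma sparse_paving_circuit_hyperplaneI:
  assumes M: "matroid E I" and sp: "sparse_paving E I" and X: "X \<subseteq> E" "X \<notin> I" "card X = rk I E"
  shows "X \<in> circuit_hyperplanes E I"
proof -
  have "circuit E I X" using paving_circuitI[OF M _ X] sp by (simp add: sparse_paving_def)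
  moreover have "rk I X < rk I E"
    using rk_le_card[OF M X(1)] rk_eq_card_iff[OF M X(1)] X(2,3) by linarith
  ultimately show ?thesis using sp unfolding sparse_paving_def circuit_hyperplanes_def by blast
qed

lemma mem_flatI:
  assumes M: "matroid E I" and F: "flat E I F" and J: "J \<subseteq> F" "J \<in> I" "card J = rk I F"
    and x: "x \<in> E" "insert x J \<notin> I"
  shows "x \<in> F"
proof (rule ccontr)
  assume "x \<notin> F"
  have "F \<subseteq> E" using F by (simp add: flat_def)
  then obtain B where B: "B \<subseteq> insert x F" "B \<in> I" "card B = rk I (insert x F)"
    using rk_basis[OF M, of "insert x F"] x(1) by blast
  have "card J < card B" using F \<open>x \<notin> F\<close> x(1) B(3) J(3) unfolding flat_def by auto
  then obtain e where e: "e \<in> B - J" "insert e J \<in> I" using matroid_augment[OF M J(2) B(2)] by blast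
  then have "insert e J \<subseteq> F" using x(2) B(1) J(1) by blast
  then have "card (insert e J) \<le> rk I F" using card_le_rk[OF M \<open>F \<subseteq> E\<close>] e(2) by blast
  moreover have "finite J" using matroid_finite_subset[OF M] J(1) \<open>F \<subseteq> E\<close> by blast
  ultimately show False using e(1) J(3) by simp
qed

lemma has_minor_iso_if_embedding:
  assumes M: "matroid E I" and h: "inj_on h S" "h ` S \<subseteq> E"
    and indep: "\<And>Y. Y \<subseteq> S \<Longrightarrow> h ` Y \<in> I \<longleftrightarrow> Y \<in> W"
  shows "has_minor_iso E I S W"
proof -
  let ?D = "E - h ` S" and ?g = "inv_into S h"
  have ground: "E - {} - ?D = h ` S" using h(2) by blast
  have g: "bij_betw ?g (h ` S) S" by (rule bij_betw_inv_into[OF inj_on_imp_bij_betw[OF h(1)]])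
  have "X \<in> minor_indep E I {} ?D \<longleftrightarrow> ?g ` X \<in> W" if X: "X \<subseteq> h ` S" for X
  proof -
    have XE: "X \<subseteq> E" using X h(2) by blast
    have gX: "?g ` X \<subseteq> S" using X by (auto intro: inv_into_into)
    have hgX: "h ` ?g ` X = X" using X by (force simp: image_image f_inv_into_f)
    have "X \<in> minor_indep E I {} ?D \<longleftrightarrow> rk I X = card X"
      unfolding minor_indep_def using X ground by (auto simp: rk_empty[OF M])
    also have "\<dots> \<longleftrightarrow> X \<in> I" using rk_eq_card_iff[OF M XE] .
    also have "\<dots> \<longleftrightarrow> ?g ` X \<in> W" using indep[OF gX] hgX by simp
    finally show ?thesis .
  qed
  then have "iso (E - {} - ?D) (minor_indep E I {} ?D) S W" unfolding iso_def ground using g by blast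
  then show ?thesis unfolding has_minor_iso_def by blast
qed

lemma embedding_if_has_minor_iso:
  assumes M: "matroid E I" and loopless: "\<And>x. x \<in> E \<Longrightarrow> {x} \<in> I"
    and minor: "has_minor_iso E I S W"
    and X: "X \<subseteq> S" "X \<in> W" "card X = rk I E"
  obtains h where "inj_on h S" "h ` S \<subseteq> E" "\<And>Y. Y \<subseteq> S \<Longrightarrow> h ` Y \<in> I \<longleftrightarrow> Y \<in> W"
proof -
  obtain C D where CD: "C \<subseteq> E" and "iso (E - C - D) (minor_indep E I C D) S W"
    using minor unfolding has_minor_iso_def by blast
  then obtain g where g: "bij_betw g (E - C - D) S"
    and iso: "\<And>Y. Y \<subseteq> E - C - D \<Longrightarrow> Y \<in> minor_indep E I C D \<longleftrightarrow> g ` Y \<in> W"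
    unfolding iso_def by blast
  define h where "h = inv_into (E - C - D) g"
  have h: "bij_betw h S (E - C - D)" unfolding h_def by (rule bij_betw_inv_into[OF g])
  then have hS: "h ` S \<subseteq> E - C - D" and inj: "inj_on h S" by (auto simp: bij_betw_def)
  have "g (h y) = y" if "y \<in> S" for y
    unfolding h_def by (rule bij_betw_inv_into_right[OF g that])
  then have gh: "g ` h ` Y = Y" if "Y \<subseteq> S" for Y
    using that by (simp add: image_image subset_eq)
  have minor_indep_h: "h ` Y \<in> minor_indep E I C D \<longleftrightarrow> Y \<in> W" if "Y \<subseteq> S" for Y
  proof -
    have "h ` Y \<subseteq> E - C - D" using hS that by blast
    from iso[OF this] show ?thesis unfolding gh[OF that] .
  qed
  have "C = {}"
  proof (rule ccontr)
    assume "C \<noteq> {}"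
    then obtain c where "c \<in> C" by blast
    then have "1 \<le> rk I C" using card_le_rk[OF M CD, of "{c}"] loopless CD by auto
    have "card (h ` X) = card X" using inj X(1) by (meson card_image inj_on_subset)
    then have "rk I (h ` X \<union> C) = card X + rk I C"
      using minor_indep_h[OF X(1)] X(2) unfolding minor_indep_def by simp
    moreover have "rk I (h ` X \<union> C) \<le> rk I E"
      using hS X(1) CD by (intro rk_mono[OF M order_refl]) blast
    ultimately show False using X(3) \<open>1 \<le> rk I C\<close> by linarith
  qed
  show ?thesis
  proof (rule that)
    show "inj_on h S" by (rule inj)
    show "h ` S \<subseteq> E" using hS by blast
    fix Y assume "Y \<subseteq> S"
    then have hY: "h ` Y \<subseteq> E - C - D" using hS by blast
    have "h ` Y \<in> minor_indep E I C D \<longleftrightarrow> rk I (h ` Y) = card (h ` Y)"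
      unfolding minor_indep_def using hY by (simp add: \<open>C = {}\<close> rk_empty[OF M])
    also have "\<dots> \<longleftrightarrow> h ` Y \<in> I" using rk_eq_card_iff[OF M] hY by blast
    finally show "h ` Y \<in> I \<longleftrightarrow> Y \<in> W" using minor_indep_h[OF \<open>Y \<subseteq> S\<close>] by simp
  qed
qed

lemma set_window:
  assumes "i + 3 \<le> length xs"
  shows "set (take 3 (drop i xs)) = {xs ! i, xs ! (i + 1), xs ! (i + 2)}"
proof -
  have "drop i xs = xs ! i # xs ! (i + 1) # xs ! (i + 2) # drop (i + 3) xs"
    using assms by (simp add: Cons_nth_drop_Suc numeral_eq_Suc)
  then show ?thesis by (simp add: numeral_eq_Suc)
qed

lemma VH_subset: "finite H \<Longrightarrow> V \<in> VH k H \<Longrightarrow> V \<subseteq> H"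
  unfolding VH_def Let_def by (auto dest!: in_set_takeD in_set_dropD)

lemma VH_convex:
  assumes H: "finite H" and V: "V \<in> VH k H" and uw: "u \<in> V" "w \<in> V"
    and v: "v \<in> H" "u < v" "v < w"
  shows "v \<in> V"
proof -
  define xs where "xs = sorted_list_of_set H"
  obtain i where i: "i + 3 \<le> length xs" and V_eq: "V = {xs ! i, xs ! (i + 1), xs ! (i + 2)}"
    using V set_window unfolding VH_def Let_def xs_def by fastforce
  have strict: "sorted_wrt (<) xs" unfolding xs_def by (rule strict_sorted_list_of_set)
  have index_less: "a < c" if "xs ! a < xs ! c" "a < length xs" "c < length xs" for a c
    using sorted_wrt_nth_less[OF strict, of c a] that by (metis less_asym linorder_neqE_nat)
  obtain c where c: "c < length xs" "v = xs ! c"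
    using v(1) H unfolding xs_def by (metis in_set_conv_nth set_sorted_list_of_set)
  obtain a where a: "a \<in> {i, i + 1, i + 2}" "u = xs ! a" using uw(1) V_eq by blast
  obtain b where b: "b \<in> {i, i + 1, i + 2}" "w = xs ! b" using uw(2) V_eq by blast
  have "a < c" "c < b" using index_less a b c i v(2,3) by auto
  then have "c = i + 1" using a b by auto
  then show ?thesis using V_eq c by simp
qed

lemma VH_no_cyclic_triple:
  assumes H: "finite H" "a \<in> H" "b \<in> H" "c \<in> H"
    and U: "U \<in> VH k H" "a \<in> U" "b \<in> U" "c \<notin> U"
    and V: "V \<in> VH k H" "b \<in> V" "c \<in> V" "a \<notin> V"
    and W: "W \<in> VH k H" "c \<in> W" "a \<in> W" "b \<notin> W"
  shows False
proof -
  have "a \<noteq> b" "b \<noteq> c" "a \<noteq> c" using U V by auto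
  then consider "a < b" "b < c" | "c < b" "b < a" | "b < c" "c < a" | "a < c" "c < b"
    | "b < a" "a < c" | "c < a" "a < b"
    by (metis linorder_neqE)
  then show False
  proof cases
    case 1 then show False using VH_convex[OF H(1) W(1) W(3) W(2) H(3)] W(4) by blast
  next
    case 2 then show False using VH_convex[OF H(1) W(1) W(2) W(3) H(3)] W(4) by blast
  next
    case 3 then show False using VH_convex[OF H(1) U(1) U(3) U(2) H(4)] U(4) by blast
  next
    case 4 then show False using VH_convex[OF H(1) U(1) U(2) U(3) H(4)] U(4) by blast
  next
    case 5 then show False using VH_convex[OF H(1) V(1) V(2) V(3) H(2)] V(4) by blast
  next
    case 6 then show False using VH_convex[OF H(1) V(1) V(3) V(2) H(2)] V(4) by blast
  qed
qed

definition triangles :: "nat set set" where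
  "triangles = {{0, 1, 2}, {2, 3, 4}, {4, 5, 0}}"

lemma W3_indep_eq: "W3_indep = {X. X \<subseteq> six \<and> card X \<le> 3 \<and> X \<notin> triangles}"
  by (simp add: W3_indep_def triangles_def)

lemma MK4_indep_eq: "MK4_indep = {X. X \<subseteq> six \<and> card X \<le> 3 \<and> X \<notin> insert {1, 3, 5} triangles}"
  by (auto simp: MK4_indep_def triangles_def)

lemma triangle_subset_six: "T \<in> triangles \<Longrightarrow> T \<subseteq> six"
  by (auto simp: triangles_def six_def)

lemma card_triangle: "T \<in> triangles \<Longrightarrow> card T = 3"
  by (auto simp: triangles_def)

lemma triangles_linked:
  "T \<in> triangles \<Longrightarrow> x \<in> six \<Longrightarrow> x \<notin> T \<Longrightarrow> \<exists>T'\<in>triangles. x \<in> T' \<and> T \<inter> T' \<noteq> {}"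
  unfolding triangles_def six_def by auto

lemma neq_if_mem_notin: "x \<in> A \<Longrightarrow> x \<notin> B \<Longrightarrow> A \<noteq> B"
  by blast

lemma odd_triple_notin_triangles: "{1, 3, 5} \<notin> triangles"
  unfolding triangles_def
  by (simp only: insert_iff empty_iff de_Morgan_disj simp_thms)
    (intro conjI neq_if_mem_notin[of 3] neq_if_mem_notin[of 1] neq_if_mem_notin[of 5]; simp)

lemma spanning_triple_notin_triangles: "{0, 1, 3} \<notin> insert {1, 3, 5} triangles"
  unfolding triangles_def
  by (simp only: insert_iff empty_iff de_Morgan_disj simp_thms)
    (intro conjI neq_if_mem_notin[of 0] neq_if_mem_notin[of 1] neq_if_mem_notin[of 3]; simp)

lemma triple_meets_triangle_in_two:
  assumes Y: "Y \<subseteq> six" "card Y = 3" "Y \<notin> insert {1, 3, 5} triangles"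
  shows "\<exists>T\<in>triangles. card (Y \<inter> T) = 2"
proof -
  obtain x y z where xyz: "Y = {x, y, z}" "x \<noteq> y" "y \<noteq> z" "x \<noteq> z"
    using Y(2) card_3_iff by metis
  have not_special: "card (Y \<inter> T) \<noteq> 3" if T: "T \<in> insert {1, 3, 5} triangles" for T
  proof
    assume "card (Y \<inter> T) = 3"
    moreover have "card T = 3" using T card_triangle by auto
    moreover have "finite Y" "finite T" using Y(2) \<open>card T = 3\<close> card_ge_0_finite by force+
    ultimately have "Y \<inter> T = Y" "Y \<inter> T = T"
      using card_subset_eq[of Y "Y \<inter> T"] card_subset_eq[of T "Y \<inter> T"] Y(2) by auto
    then show False using T Y(3) by auto
  qed
  have "\<forall>T\<in>{{0, 1, 2}, {2, 3, 4}, {4, 5, 0}, {1, 3, 5}}. card ({x, y, z} \<inter> T) \<noteq> 3"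
    using not_special unfolding xyz(1) triangles_def by blast
  moreover have "x \<in> six" "y \<in> six" "z \<in> six" using Y(1) xyz(1) by auto
  ultimately show ?thesis using xyz unfolding triangles_def six_def by auto
qed

locale rank3_paving =
  fixes E :: "'a set" and I :: "'a set set"
  assumes matroid: "matroid E I" and paving: "paving E I" and rk_ground: "rk I E = 3"
begin

lemma indep_if_card_le_2: "X \<subseteq> E \<Longrightarrow> card X \<le> 2 \<Longrightarrow> X \<in> I"
  using paving_indep_if_card_less[OF matroid paving] rk_ground by simp

lemma hyperplane_subset: "hyperplane E I H \<Longrightarrow> H \<subseteq> E"
  by (simp add: hyperplane_def flat_def)

lemma rk_hyperplane: "hyperplane E I H \<Longrightarrow> rk I H = 2"
  by (simp add: hyperplane_def rk_ground)

lemma hyperplane_triple_dependent: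
  assumes H: "hyperplane E I H" and X: "X \<subseteq> H" "card X = 3"
  shows "X \<notin> I"
  using card_le_rk[OF matroid hyperplane_subset[OF H] X(1)] rk_hyperplane[OF H] X(2) by auto

lemma hyperplane_insert_indep:
  assumes H: "hyperplane E I H" and pq: "p \<in> H" "q \<in> H" "p \<noteq> q" and x: "x \<in> E" "x \<notin> H"
  shows "{x, p, q} \<in> I"
proof (rule ccontr)
  assume dep: "{x, p, q} \<notin> I"
  have "{p, q} \<in> I" using hyperplane_subset[OF H] pq by (intro indep_if_card_le_2) auto
  moreover have "flat E I H" using H by (simp add: hyperplane_def)
  ultimately have "x \<in> H"
    using mem_flatI[OF matroid _ _ _ _ x(1) dep] pq rk_hyperplane[OF H] by simp
  then show False using x(2) by simp
qed

lemma hyperplane_eqI: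
  assumes "hyperplane E I H" "hyperplane E I H'" "p \<in> H" "q \<in> H" "p \<in> H'" "q \<in> H'" "p \<noteq> q"
  shows "H = H'"
proof -
  have "H \<subseteq> H'"
    if H: "hyperplane E I H" "hyperplane E I H'" "p \<in> H" "q \<in> H" "p \<in> H'" "q \<in> H'" for H H'
  proof
    fix x assume "x \<in> H"
    then have "x \<in> E" using hyperplane_subset[OF H(1)] by blast
    show "x \<in> H'"
    proof (rule ccontr)
      assume "x \<notin> H'"
      then have "x \<noteq> p" "x \<noteq> q" using H(5,6) by auto
      then have "card {x, p, q} = 3" using \<open>p \<noteq> q\<close> by simp
      moreover have "{x, p, q} \<subseteq> H" using \<open>x \<in> H\<close> H(3,4) by blast
      moreover have "{x, p, q} \<in> I"
        using hyperplane_insert_indep[OF H(2) H(5,6) \<open>p \<noteq> q\<close> \<open>x \<in> E\<close> \<open>x \<notin> H'\<close>] .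
      ultimately show False using hyperplane_triple_dependent[OF H(1)] by blast
    qed
  qed
  then show ?thesis using assms by blast
qed

lemma inj_on_triangle_lines:
  assumes h: "inj_on h six"
    and L: "\<And>T. T \<in> triangles \<Longrightarrow> hyperplane E I (L T) \<and> h ` T \<subseteq> L T"
    and not_all_eq: "\<not> (L {0, 1, 2} = L {2, 3, 4} \<and> L {2, 3, 4} = L {4, 5, 0})"
  shows "inj_on L triangles"
proof -
  have T: "{0, 1, 2} \<in> triangles" "{2, 3, 4} \<in> triangles" "{4, 5, 0} \<in> triangles"
    by (simp_all add: triangles_def)
  note hyp = L[OF T(1)] L[OF T(2)] L[OF T(3)]
  have dist: "h 0 \<noteq> h 2" "h 2 \<noteq> h 4" "h 0 \<noteq> h 4"
    using inj_onD[OF h, of 0 2] inj_onD[OF h, of 2 4] inj_onD[OF h, of 0 4] by (auto simp: six_def)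
  have ab: "L {0, 1, 2} \<noteq> L {2, 3, 4}"
  proof
    assume eq: "L {0, 1, 2} = L {2, 3, 4}"
    have "L {4, 5, 0} = L {0, 1, 2}"
      using hyperplane_eqI[of "L {4, 5, 0}" "L {0, 1, 2}" "h 0" "h 4"] hyp eq dist by auto
    then show False using not_all_eq eq by simp
  qed
  have bc: "L {2, 3, 4} \<noteq> L {4, 5, 0}"
  proof
    assume eq: "L {2, 3, 4} = L {4, 5, 0}"
    have "L {0, 1, 2} = L {2, 3, 4}"
      using hyperplane_eqI[of "L {0, 1, 2}" "L {2, 3, 4}" "h 0" "h 2"] hyp eq dist by auto
    then show False using not_all_eq eq by simp
  qed
  have ac: "L {0, 1, 2} \<noteq> L {4, 5, 0}"
  proof
    assume eq: "L {0, 1, 2} = L {4, 5, 0}"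
    have "L {2, 3, 4} = L {0, 1, 2}"
      using hyperplane_eqI[of "L {2, 3, 4}" "L {0, 1, 2}" "h 2" "h 4"] hyp eq dist by auto
    then show False using not_all_eq eq by simp
  qed
  show ?thesis using ab bc ac unfolding triangles_def inj_on_def by auto
qed

end

locale triangles_on_lines = rank3_paving +
  fixes h :: "nat \<Rightarrow> 'a" and L :: "nat set \<Rightarrow> 'a set"
  assumes inj_h: "inj_on h six" and h_six: "h ` six \<subseteq> E"
    and line: "\<And>T. T \<in> triangles \<Longrightarrow> hyperplane E I (L T)"
    and triangle_on_line: "\<And>T. T \<in> triangles \<Longrightarrow> h ` T \<subseteq> L T"
    and inj_L: "inj_on L triangles"
begin

lemma card_image_h: "Y \<subseteq> six \<Longrightarrow> card (h ` Y) = card Y"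
  using card_image inj_on_subset[OF inj_h] by blast

lemma h_eq_iff: "x \<in> six \<Longrightarrow> y \<in> six \<Longrightarrow> h x = h y \<longleftrightarrow> x = y"
  using inj_onD[OF inj_h] by blast

lemma not_on_line:
  assumes T: "T \<in> triangles" and x: "x \<in> six" "x \<notin> T"
  shows "h x \<notin> L T"
proof
  assume on_line: "h x \<in> L T"
  obtain T' y where T': "T' \<in> triangles" "x \<in> T'" and y: "y \<in> T" "y \<in> T'"
    using triangles_linked[OF T x] by blast
  have "y \<in> six" "x \<noteq> y" using triangle_subset_six[OF T] x y by auto
  then have "h x \<noteq> h y" using h_eq_iff x(1) by blast
  moreover have "h x \<in> L T'" "h y \<in> L T" "h y \<in> L T'"
    using triangle_on_line T T'(1) T'(2) y by blast+
  ultimately have "L T = L T'" using hyperplane_eqI[OF line[OF T] line[OF T'(1)] on_line] by blast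
  then show False using inj_onD[OF inj_L _ T T'(1)] x(2) T'(2) by blast
qed

lemma image_triangle_dependent: "T \<in> triangles \<Longrightarrow> h ` T \<notin> I"
  using hyperplane_triple_dependent[OF line triangle_on_line] card_image_h triangle_subset_six
    card_triangle by simp

lemma image_triple_indep:
  assumes Y: "Y \<subseteq> six" "card Y = 3" "Y \<notin> insert {1, 3, 5} triangles"
  shows "h ` Y \<in> I"
proof -
  obtain T where T: "T \<in> triangles" "card (Y \<inter> T) = 2"
    using triple_meets_triangle_in_two[OF Y] by blast
  then obtain p q where pq: "Y \<inter> T = {p, q}" "p \<noteq> q" by (meson card_2_iff)
  have "card (Y - T) = 1" using card_Diff_subset_Int[of Y T] Y(2) T(2) card_ge_0_finite by force
  then obtain x where x: "Y - T = {x}" by (rule card_1_singletonE)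
  have "Y = (Y - T) \<union> (Y \<inter> T)" by blast
  then have Y_eq: "Y = {x, p, q}" unfolding x pq(1) by (simp add: insert_commute)
  then have six: "p \<in> six" "q \<in> six" "x \<in> six" using Y(1) by auto
  have "{h x, h p, h q} \<in> I"
  proof (rule hyperplane_insert_indep)
    show "hyperplane E I (L T)" by (rule line[OF T(1)])
    show "h p \<in> L T" "h q \<in> L T" using triangle_on_line[OF T(1)] pq(1) by auto
    show "h p \<noteq> h q" using h_eq_iff six pq(2) by blast
    show "h x \<in> E" using h_six six by blast
    show "h x \<notin> L T" using not_on_line T(1) six x by blast
  qed
  then show ?thesis unfolding Y_eq by simp
qed

lemma image_indep_iff:
  assumes Y: "Y \<subseteq> six"
  shows "h ` Y \<in> I \<longleftrightarrow>
    card Y \<le> 3 \<and> Y \<notin> triangles \<and> (Y = {1, 3, 5} \<longrightarrow> h ` {1, 3, 5} \<in> I)"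
proof -
  consider "card Y \<le> 2" | "card Y = 3" | "card Y > 3" by linarith
  then show ?thesis
  proof cases
    case 1
    then have "h ` Y \<in> I" using card_image_h[OF Y] h_six Y by (intro indep_if_card_le_2) auto
    moreover have "Y \<notin> triangles" "Y \<noteq> {1, 3, 5}" using 1 card_triangle by force+
    ultimately show ?thesis using 1 by auto
  next
    case 2
    show ?thesis
    proof (cases "Y \<in> insert {1, 3, 5} triangles")
      case True
      then show ?thesis using image_triangle_dependent odd_triple_notin_triangles 2 by auto
    next
      case False
      then show ?thesis using image_triple_indep[OF Y 2 False] 2 by auto
    qed
  next
    case 3
    have "h ` Y \<subseteq> E" using h_six Y by blast
    have "h ` Y \<notin> I"
    proof
      assume "h ` Y \<in> I"
      with card_le_rk[OF matroid order_refl \<open>h ` Y \<subseteq> E\<close>] have "card (h ` Y) \<le> rk I E" .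
      then show False using card_image_h[OF Y] 3 rk_ground by simp
    qed
    then show ?thesis using 3 by auto
  qed
qed

lemma W3_or_MK4_minor: "has_minor_iso E I six W3_indep \<or> has_minor_iso E I six MK4_indep"
proof (cases "h ` {1, 3, 5} \<in> I")
  case True
  have "has_minor_iso E I six W3_indep"
  proof (rule has_minor_iso_if_embedding[OF matroid inj_h h_six])
    fix Y assume "Y \<subseteq> six"
    then show "h ` Y \<in> I \<longleftrightarrow> Y \<in> W3_indep"
      using image_indep_iff True by (auto simp: W3_indep_eq)
  qed
  then show ?thesis ..
next
  case False
  have "has_minor_iso E I six MK4_indep"
  proof (rule has_minor_iso_if_embedding[OF matroid inj_h h_six])
    fix Y assume "Y \<subseteq> six"
    then show "h ` Y \<in> I \<longleftrightarrow> Y \<in> MK4_indep"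
      using image_indep_iff False by (auto simp: MK4_indep_eq)
  qed
  then show ?thesis ..
qed

end

lemma triangle_windows_not_on_one_line:
  fixes h :: "nat \<Rightarrow> 'a::linorder"
  assumes h: "inj_on h six"
    and windows: "\<And>T. T \<in> triangles \<Longrightarrow> finite (L T) \<and> h ` T \<in> VH k (L T)"
  shows "\<not> (L {0, 1, 2} = L {2, 3, 4} \<and> L {2, 3, 4} = L {4, 5, 0})"
proof
  assume eq: "L {0, 1, 2} = L {2, 3, 4} \<and> L {2, 3, 4} = L {4, 5, 0}"
  have T: "{0, 1, 2} \<in> triangles" "{2, 3, 4} \<in> triangles" "{4, 5, 0} \<in> triangles"
    by (simp_all add: triangles_def)
  have mem_iff: "h a \<in> h ` A \<longleftrightarrow> a \<in> A" if "a \<in> six" "A \<subseteq> six" for a A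
    by (rule inj_on_image_mem_iff[OF h that])
  note finite = windows[THEN conjunct1] and window = windows[THEN conjunct2]
  show False
  proof (rule VH_no_cyclic_triple)
    show "finite (L {0, 1, 2})" by (rule finite[OF T(1)])
    show "h ` {0, 1, 2} \<in> VH k (L {0, 1, 2})" "h ` {2, 3, 4} \<in> VH k (L {0, 1, 2})"
      "h ` {4, 5, 0} \<in> VH k (L {0, 1, 2})"
      using window[OF T(1)] window[OF T(2)] window[OF T(3)] eq by auto
    then show "h 0 \<in> L {0, 1, 2}" "h 2 \<in> L {0, 1, 2}" "h 4 \<in> L {0, 1, 2}"
      using VH_subset[OF finite[OF T(1)]] by blast+
    show "h 0 \<in> h ` {0, 1, 2}" "h 2 \<in> h ` {0, 1, 2}" "h 2 \<in> h ` {2, 3, 4}"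
      "h 4 \<in> h ` {2, 3, 4}" "h 4 \<in> h ` {4, 5, 0}" "h 0 \<in> h ` {4, 5, 0}"
      by simp_all
    show "h 4 \<notin> h ` {0, 1, 2}" "h 0 \<notin> h ` {2, 3, 4}" "h 2 \<notin> h ` {4, 5, 0}"
      using mem_iff[of 4 "{0, 1, 2}"] mem_iff[of 0 "{2, 3, 4}"] mem_iff[of 2 "{4, 5, 0}"]
      by (simp_all add: six_def)
  qed
qed

lemma W3_or_MK4_minor_if_VM_minor:
  fixes E :: "'a::linorder set"
  assumes M: "rank3_paving E I"
    and Mk: "matroid E Ik" "rk Ik E = 3" "sparse_paving E Ik"
    and circuit_hyperplanes_Ik: "circuit_hyperplanes E Ik = VM k E I"
    and W: "{0, 1, 3} \<in> W" "triangles \<inter> W = {}"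
    and minor: "has_minor_iso E Ik six W"
  shows "has_minor_iso E I six W3_indep \<or> has_minor_iso E I six MK4_indep"
proof -
  interpret Mk: rank3_paving E Ik using Mk by unfold_locales (simp_all add: sparse_paving_def)
  have loopless: "{x} \<in> Ik" if "x \<in> E" for x using that by (intro Mk.indep_if_card_le_2) auto
  have spanning: "{0, 1, 3} \<subseteq> six" "card {0, 1, 3 :: nat} = rk Ik E" using Mk(2) by (simp_all add: six_def)
  obtain h where h: "inj_on h six" "h ` six \<subseteq> E"
    and h_indep: "\<And>Y. Y \<subseteq> six \<Longrightarrow> h ` Y \<in> Ik \<longleftrightarrow> Y \<in> W"
    by (rule embedding_if_has_minor_iso[OF Mk(1) loopless minor spanning(1) W(1) spanning(2)])
      (assumption, rule that)
  have "\<exists>L. hyperplane E I L \<and> h ` T \<in> VH k L" if T: "T \<in> triangles" for T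
  proof -
    note T_six = triangle_subset_six[OF T]
    have "h ` T \<subseteq> E" using h(2) T_six by blast
    moreover have "h ` T \<notin> Ik" using h_indep[OF T_six] W(2) T by blast
    moreover have "card (h ` T) = rk Ik E"
      using card_image[OF inj_on_subset[OF h(1) T_six]] card_triangle[OF T] Mk(2) by simp
    ultimately have "h ` T \<in> circuit_hyperplanes E Ik"
      by (rule sparse_paving_circuit_hyperplaneI[OF Mk(1,3)])
    then show ?thesis using circuit_hyperplanes_Ik unfolding VM_def by blast
  qed
  then obtain L
    where L: "\<And>T. T \<in> triangles \<Longrightarrow> hyperplane E I (L T) \<and> h ` T \<in> VH k (L T)"
    by metis
  have finite_L: "finite (L T)" if "T \<in> triangles" for T
    using L[OF that] by (intro matroid_finite_subset[OF rank3_paving.matroid[OF M]]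
      rank3_paving.hyperplane_subset[OF M]) blast
  have on_line: "hyperplane E I (L T) \<and> h ` T \<subseteq> L T" if "T \<in> triangles" for T
    using L[OF that] VH_subset[OF finite_L[OF that]] by blast
  have "triangles_on_lines E I h L"
  proof (unfold_locales)
    show "inj_on L triangles"
      using rank3_paving.inj_on_triangle_lines[OF M h(1) on_line]
        triangle_windows_not_on_one_line[OF h(1)] finite_L L by blast
  qed (use M h on_line in \<open>auto simp: rank3_paving_def\<close>)
  then show ?thesis by (rule triangles_on_lines.W3_or_MK4_minor)
qed

theorem lemma11:
  fixes E :: "'a::linorder set" and I I0 I1 :: "'a set set"
  assumes "matroid E I" and "rk I E = 3" and "paving E I"
    and "matroid E I0" and "rk I0 E = 3" and "sparse_paving E I0"
    and "circuit_hyperplanes E I0 = VM 0 E I"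
    and "matroid E I1" and "rk I1 E = 3" and "sparse_paving E I1"
    and "circuit_hyperplanes E I1 = VM 1 E I"
    and "\<not> has_minor_iso E I six W3_indep" and "\<not> has_minor_iso E I six MK4_indep"
  shows "\<not> has_minor_iso E I0 six W3_indep \<and> \<not> has_minor_iso E I0 six MK4_indep
    \<and> \<not> has_minor_iso E I1 six W3_indep \<and> \<not> has_minor_iso E I1 six MK4_indep"
proof -
  have M: "rank3_paving E I" using assms(1-3) by unfold_locales
  have W3: "{0, 1, 3} \<in> W3_indep" "triangles \<inter> W3_indep = {}"
    using spanning_triple_notin_triangles by (auto simp: W3_indep_eq six_def)
  have MK4: "{0, 1, 3} \<in> MK4_indep" "triangles \<inter> MK4_indep = {}"
    using spanning_triple_notin_triangles by (auto simp: MK4_indep_eq six_def)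
  have no_minor: "\<not> has_minor_iso E Ik six W3_indep \<and> \<not> has_minor_iso E Ik six MK4_indep"
    if "matroid E Ik" "rk Ik E = 3" "sparse_paving E Ik" "circuit_hyperplanes E Ik = VM k E I" for Ik k
    using W3_or_MK4_minor_if_VM_minor[OF M that W3] W3_or_MK4_minor_if_VM_minor[OF M that MK4]
      assms(12,13) by blast
  show ?thesis using no_minor[OF assms(4-7)] no_minor[OF assms(8-11)] by blast
qed

end
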